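(* Let $G$ be a connected graph of order $n\ge 4$ such that $px_k(G)=2$ for each integer $k$ with $3\leq k\leq n-1$. Then $px_n(G)=2$ if $G$ is traceable (has a Hamilton path), and $px_n(G)=3$ otherwise.
   Context: All graphs are finite, simple, undirected and connected. An edge-coloring of a graph assigns a color to each edge (adjacent edges may receive the same color). A tree in an edge-colored graph is proper if any two adjacent edges of the tree receive different colors. For $S\subseteq V(G)$, an $S$-tree is a subgraph of $G$ that is a tree containing all vertices of $S$. For a connected graph $G$ of order $n$ and an integer $k$ with $2\le k\le n$, an edge-coloring of $G$ is a $k$-proper coloring if for every set $S$ of $k$ vertices of $G$ there exists a proper $S$-tree in $G$. The $k$-proper index $px_k(G)$ is the minimum number of colors used in a $k$-proper coloring of $G$. *)

theory Defs
  imports Main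
begin

definition simple_graph :: "'a set \<Rightarrow> 'a set set \<Rightarrow> bool" where
  "simple_graph V E \<longleftrightarrow> finite V \<and>
     (\<forall>e\<in>E. \<exists>x y. x \<in> V \<and> y \<in> V \<and> x \<noteq> y \<and> e = {x, y})"

definition connected_graph :: "'a set \<Rightarrow> 'a set set \<Rightarrow> bool" where
  "connected_graph W T \<longleftrightarrow> W \<noteq> {} \<and>
     (\<forall>u\<in>W. \<forall>v\<in>W. (u, v) \<in> {(x, y). {x, y} \<in> T}\<^sup>*)"

definition has_cycle :: "'a set set \<Rightarrow> bool" where
  "has_cycle T \<longleftrightarrow> (\<exists>vs. length vs \<ge> 3 \<and> distinct vs \<and>
     (\<forall>i. Suc i < length vs \<longrightarrow> {vs ! i, vs ! Suc i} \<in> T) \<and>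
     {last vs, hd vs} \<in> T)"

definition is_subtree :: "'a set \<Rightarrow> 'a set set \<Rightarrow> 'a set \<Rightarrow> 'a set set \<Rightarrow> bool" where
  "is_subtree V E W T \<longleftrightarrow> W \<subseteq> V \<and> T \<subseteq> E \<and> (\<forall>e\<in>T. e \<subseteq> W) \<and>
     connected_graph W T \<and> \<not> has_cycle T"

definition proper_tree :: "('a set \<Rightarrow> nat) \<Rightarrow> 'a set set \<Rightarrow> bool" where
  "proper_tree c T \<longleftrightarrow> (\<forall>e\<in>T. \<forall>f\<in>T. e \<noteq> f \<and> e \<inter> f \<noteq> {} \<longrightarrow> c e \<noteq> c f)"

definition k_proper_coloring :: "'a set \<Rightarrow> 'a set set \<Rightarrow> nat \<Rightarrow> ('a set \<Rightarrow> nat) \<Rightarrow> bool" where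
  "k_proper_coloring V E k c \<longleftrightarrow>
     (\<forall>S. S \<subseteq> V \<and> card S = k \<longrightarrow>
        (\<exists>W T. is_subtree V E W T \<and> S \<subseteq> W \<and> proper_tree c T))"

definition proper_index :: "'a set \<Rightarrow> 'a set set \<Rightarrow> nat \<Rightarrow> nat" where
  "proper_index V E k = (LEAST m. \<exists>c. k_proper_coloring V E k c \<and> card (c ` E) = m)"

definition traceable :: "'a set \<Rightarrow> 'a set set \<Rightarrow> bool" where
  "traceable V E \<longleftrightarrow> (\<exists>vs. distinct vs \<and> set vs = V \<and>
     (\<forall>i. Suc i < length vs \<longrightarrow> {vs ! i, vs ! Suc i} \<in> E))"

end

theory Submission
  imports Defs
begin

text \<open>In a proper tree whose edges carry at most two colors every vertex lies on at most two
  edges, so such a tree is a Hamilton path of its vertex set: a longest path cannot be extended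
  along an edge leaving it at an end, and an edge leaving it at an inner vertex would be a third
  edge there. Hence an \<open>n\<close>-proper coloring with two colors yields a Hamilton path, so
  \<open>px\<^sub>n(G) \<ge> 3\<close> if \<open>G\<close> is not traceable, and \<open>px\<^sub>n(G) \<ge> 2\<close> since a spanning tree on
  three or more vertices has two adjacent edges. If \<open>G\<close> is traceable, coloring the edges of a
  Hamilton path alternately is \<open>k\<close>-proper for every \<open>k\<close>. Otherwise take a two-coloring that
  is \<open>(n-1)\<close>-proper and a proper tree containing \<open>V - {v}\<close>: it cannot contain \<open>v\<close>, as it
  would then be a Hamilton path, so attaching \<open>v\<close> by a pendant edge of a fresh third color gives an
  \<open>n\<close>-proper coloring with three colors.\<close>

lemma simple_graph_edge_subset: "simple_graph V E \<Longrightarrow> e \<in> E \<Longrightarrow> e \<subseteq> V"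
  unfolding simple_graph_def by fastforce

lemma simple_graph_finite_edges:
  assumes "simple_graph V E"
  shows "finite E"
proof (rule finite_subset)
  show "E \<subseteq> Pow V" using simple_graph_edge_subset[OF assms] by blast
  show "finite (Pow V)" using assms unfolding simple_graph_def by simp
qed

lemma simple_graph_no_loop: "simple_graph V E \<Longrightarrow> {v} \<notin> E"
  unfolding simple_graph_def by (auto simp: doubleton_eq_iff)

section \<open>Walks and paths\<close>

abbreviation adj :: "'a set set \<Rightarrow> ('a \<times> 'a) set" where
  "adj T \<equiv> {(x, y). {x, y} \<in> T}"

lemma sym_adj: "sym (adj T)"
  by (auto intro: symI simp: insert_commute)

lemma adj_rtrancl_sym: "(x, y) \<in> (adj T)\<^sup>* \<Longrightarrow> (y, x) \<in> (adj T)\<^sup>*"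
  using sym_rtrancl[OF sym_adj] by (rule symD)

lemma adj_rtrancl_crossing:
  assumes "(x, y) \<in> (adj T)\<^sup>*" "x \<in> A" "y \<notin> A"
  shows "\<exists>a b. {a, b} \<in> T \<and> a \<in> A \<and> b \<notin> A"
  using assms by (induction rule: rtrancl_induct) auto

definition is_walk :: "'a set set \<Rightarrow> 'a list \<Rightarrow> bool" where
  "is_walk T vs \<longleftrightarrow> (\<forall>i. Suc i < length vs \<longrightarrow> {vs ! i, vs ! Suc i} \<in> T)"

definition is_path :: "'a set set \<Rightarrow> 'a list \<Rightarrow> bool" where
  "is_path T vs \<longleftrightarrow> distinct vs \<and> is_walk T vs"

lemma traceable_iff_path: "traceable V E \<longleftrightarrow> (\<exists>vs. is_path E vs \<and> set vs = V)"
  unfolding traceable_def is_path_def is_walk_def by blast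

lemma is_walk_mono: "is_walk T vs \<Longrightarrow> T \<subseteq> T' \<Longrightarrow> is_walk T' vs"
  unfolding is_walk_def by blast

lemma is_walk_imp_is_walk_rev:
  assumes "is_walk T vs"
  shows "is_walk T (rev vs)"
  unfolding is_walk_def
proof (intro allI impI)
  fix i assume i: "Suc i < length (rev vs)"
  define j where "j = length vs - Suc (Suc i)"
  have "Suc j < length vs" "Suc j = length vs - Suc i" using i unfolding j_def by auto
  then have "{vs ! j, vs ! Suc j} \<in> T" using assms unfolding is_walk_def by blast
  then show "{rev vs ! i, rev vs ! Suc i} \<in> T"
    using i by (simp add: rev_nth j_def \<open>Suc j = length vs - Suc i\<close>[symmetric] insert_commute)
qed

lemma is_walk_rev [simp]: "is_walk T (rev vs) \<longleftrightarrow> is_walk T vs"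
  using is_walk_imp_is_walk_rev rev_rev_ident by metis

lemma is_walk_Cons:
  assumes "is_walk T vs" "{b, hd vs} \<in> T"
  shows "is_walk T (b # vs)"
  unfolding is_walk_def
proof (intro allI impI)
  fix i assume "Suc i < length (b # vs)"
  then show "{(b # vs) ! i, (b # vs) ! Suc i} \<in> T"
    using assms by (cases i) (auto simp: is_walk_def hd_conv_nth)
qed

lemma is_walk_snoc:
  assumes "is_walk T vs" "{last vs, b} \<in> T"
  shows "is_walk T (vs @ [b])"
proof -
  have "is_walk T (rev (vs @ [b]))"
    using is_walk_Cons[of T "rev vs" b] assms by (simp add: hd_rev insert_commute)
  then show ?thesis by (simp only: is_walk_rev)
qed

lemma adj_rtrancl_walk:
  assumes "is_walk T vs" "j < length vs"
  shows "(vs ! 0, vs ! j) \<in> (adj T)\<^sup>*"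
  using assms(2)
proof (induction j)
  case (Suc j)
  then have "(vs ! j, vs ! Suc j) \<in> adj T" using assms(1) unfolding is_walk_def by simp
  with Suc show ?case by (simp add: rtrancl_into_rtrancl)
qed simp

lemma connected_graph_walk:
  assumes "is_walk T vs" "vs \<noteq> []"
  shows "connected_graph (set vs) T"
  unfolding connected_graph_def
proof (intro conjI ballI)
  fix x y assume "x \<in> set vs" "y \<in> set vs"
  then obtain i j where "i < length vs" "x = vs ! i" "j < length vs" "y = vs ! j"
    by (metis in_set_conv_nth)
  then have "(vs ! 0, x) \<in> (adj T)\<^sup>*" "(vs ! 0, y) \<in> (adj T)\<^sup>*"
    using adj_rtrancl_walk[OF assms(1)] by simp_all
  then show "(x, y) \<in> (adj T)\<^sup>*"
    by (rule rtrancl_trans[OF adj_rtrancl_sym])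
qed (use assms(2) in simp)

lemma connected_graph_neighbour:
  assumes "connected_graph V E" "v \<in> V" "w \<in> V" "v \<noteq> w"
  shows "\<exists>u. {v, u} \<in> E"
proof -
  have "(v, w) \<in> (adj E)\<^sup>*"
    using assms unfolding connected_graph_def by blast
  then show ?thesis
    using assms(4) by (cases rule: converse_rtranclE) auto
qed

lemma path_edges_meet:
  assumes dist: "distinct vs" and "Suc i < length vs" "Suc j < length vs"
    and "{vs ! i, vs ! Suc i} \<inter> {vs ! j, vs ! Suc j} \<noteq> {}"
  shows "i = j \<or> j = Suc i \<or> i = Suc j"
proof -
  have "vs ! i = vs ! j \<or> vs ! i = vs ! Suc j \<or> vs ! Suc i = vs ! j \<or> vs ! Suc i = vs ! Suc j"
    using assms(4) by auto
  then show ?thesis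
    using assms(2,3) by (auto simp: nth_eq_iff_index_eq[OF dist])
qed

lemma path_edges_eq:
  assumes dist: "distinct vs" and "Suc i < length vs" "Suc j < length vs"
    and "{vs ! i, vs ! Suc i} = {vs ! j, vs ! Suc j}"
  shows "i = j"
proof -
  have "vs ! i = vs ! j \<or> vs ! i = vs ! Suc j" "vs ! Suc i = vs ! j \<or> vs ! Suc i = vs ! Suc j"
    using assms(4) by (auto simp: doubleton_eq_iff)
  then show ?thesis
    using assms(2,3) by (auto simp: nth_eq_iff_index_eq[OF dist])
qed

section \<open>Spanning trees\<close>

lemma path_edge_neq_closing_edge:
  assumes dist: "distinct vs" and len: "3 \<le> length vs" and i: "Suc i < length vs"
  shows "{vs ! i, vs ! Suc i} \<noteq> {last vs, hd vs}"
proof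
  let ?l = "length vs"
  have ne: "vs \<noteq> []" and idx: "i < ?l" "?l - 1 < ?l" "0 < ?l"
    using len i by auto
  assume "{vs ! i, vs ! Suc i} = {last vs, hd vs}"
  then have "{vs ! i, vs ! Suc i} = {vs ! (?l - 1), vs ! 0}"
    using ne by (simp add: hd_conv_nth last_conv_nth)
  then have "(i = ?l - 1 \<and> Suc i = 0) \<or> (i = 0 \<and> Suc i = ?l - 1)"
    using dist i idx by (simp add: doubleton_eq_iff nth_eq_iff_index_eq)
  then show False using len by linarith
qed

lemma connected_graph_Diff_cycle_edge:
  assumes conn: "connected_graph W T" and cyc: "has_cycle T"
  shows "\<exists>e\<in>T. connected_graph W (T - {e})"
proof -
  obtain vs where len: "3 \<le> length vs" and dist: "distinct vs" and walk: "is_walk T vs"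
    and closing: "{last vs, hd vs} \<in> T"
    using cyc unfolding has_cycle_def is_walk_def by blast
  let ?e = "{last vs, hd vs}"
  have ne: "vs \<noteq> []" using len by auto
  have "is_walk (T - {?e}) vs"
    using walk path_edge_neq_closing_edge[OF dist len] unfolding is_walk_def by blast
  from adj_rtrancl_walk[OF this, of "length vs - 1"]
  have ends: "(hd vs, last vs) \<in> (adj (T - {?e}))\<^sup>*"
    using ne by (simp add: hd_conv_nth last_conv_nth)
  have "adj T \<subseteq> (adj (T - {?e}))\<^sup>*"
  proof
    fix p assume "p \<in> adj T"
    then obtain x y where p: "p = (x, y)" "{x, y} \<in> T" by blast
    show "p \<in> (adj (T - {?e}))\<^sup>*"
    proof (cases "{x, y} = ?e")
      case True
      then have "p = (last vs, hd vs) \<or> p = (hd vs, last vs)"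
        using p(1) by (auto simp: doubleton_eq_iff)
      then show ?thesis using ends adj_rtrancl_sym[OF ends] by auto
    next
      case False
      with p have "p \<in> adj (T - {?e})" by simp
      then show ?thesis by (rule r_into_rtrancl)
    qed
  qed
  then have "(adj T)\<^sup>* \<subseteq> (adj (T - {?e}))\<^sup>*"
    by (rule rtrancl_subset_rtrancl)
  then have "connected_graph W (T - {?e})"
    using conn unfolding connected_graph_def by (meson subsetD)
  with closing show ?thesis by blast
qed

lemma connected_graph_acyclic_subgraph:
  "finite T0 \<Longrightarrow> connected_graph W T0 \<Longrightarrow> \<exists>T\<subseteq>T0. connected_graph W T \<and> \<not> has_cycle T"
proof (induction "card T0" arbitrary: T0 rule: less_induct)
  case less
  show ?case
  proof (cases "has_cycle T0")
    case True
    then obtain e where e: "e \<in> T0" and conn: "connected_graph W (T0 - {e})"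
      using connected_graph_Diff_cycle_edge less.prems(2) by blast
    have "card (T0 - {e}) < card T0"
      using less.prems(1) e by (rule card_Diff1_less)
    moreover have "finite (T0 - {e})"
      using less.prems(1) by simp
    ultimately obtain T where "T \<subseteq> T0 - {e}" "connected_graph W T" "\<not> has_cycle T"
      using less.hyps conn by blast
    then show ?thesis by blast
  next
    case False
    then show ?thesis using less.prems(2) by auto
  qed
qed

lemma spanning_tree_exists:
  assumes graph: "simple_graph V E" and "finite T0" "T0 \<subseteq> E" "connected_graph V T0"
  shows "\<exists>T\<subseteq>T0. is_subtree V E V T"
proof -
  obtain T where "T \<subseteq> T0" "connected_graph V T" "\<not> has_cycle T"
    using connected_graph_acyclic_subgraph assms(2,4) by blast
  moreover have "\<forall>e\<in>T. e \<subseteq> V"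
    using calculation(1) assms(3) simple_graph_edge_subset[OF graph] by blast
  ultimately show ?thesis
    using assms(3) unfolding is_subtree_def by blast
qed

lemma cycle_two_neighbours:
  assumes len: "3 \<le> length vs" and dist: "distinct vs" and walk: "is_walk T vs"
    and closing: "{last vs, hd vs} \<in> T" and v: "v \<in> set vs"
  shows "\<exists>x y. x \<noteq> y \<and> x \<noteq> v \<and> y \<noteq> v \<and> {x, v} \<in> T \<and> {y, v} \<in> T"
proof -
  let ?l = "length vs"
  have ne: "vs \<noteq> []" using len by auto
  obtain p where p: "p < ?l" "vs ! p = v"
    using v by (metis in_set_conv_nth)
  have inj: "vs ! i \<noteq> vs ! j" if "i < ?l" "j < ?l" "i \<noteq> j" for i j
    using nth_eq_iff_index_eq[OF dist] that by blast
  have edge: "{vs ! i, vs ! Suc i} \<in> T" if "Suc i < ?l" for i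
    using walk that unfolding is_walk_def by blast
  have closing': "{vs ! (?l - 1), vs ! 0} \<in> T"
    using closing ne by (simp add: hd_conv_nth last_conv_nth)
  consider "p = 0" | "Suc p = ?l" | "0 < p" "Suc p < ?l"
    using p by linarith
  then show ?thesis
  proof cases
    case 1
    have "{vs ! 1, v} \<in> T" "{vs ! (?l - 1), v} \<in> T"
      using edge[of 0] closing' len p 1 by (simp_all add: insert_commute)
    moreover have "vs ! 1 \<noteq> vs ! (?l - 1)" "vs ! 1 \<noteq> v" "vs ! (?l - 1) \<noteq> v"
      using inj len p 1 by auto
    ultimately show ?thesis by blast
  next
    case 2
    have "Suc (?l - 2) = p" "?l - 1 = p" using 2 len by simp_all
    then have "{vs ! (?l - 2), v} \<in> T" "{vs ! 0, v} \<in> T"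
      using edge[of "?l - 2"] closing' p 2 by (simp_all add: insert_commute)
    moreover have "vs ! (?l - 2) \<noteq> vs ! 0" "vs ! (?l - 2) \<noteq> vs ! p" "vs ! 0 \<noteq> vs ! p"
      by (rule inj; use len 2 in linarith)+
    ultimately show ?thesis using p(2) by blast
  next
    case 3
    have "Suc (p - 1) = p" using 3 by simp
    then have "{vs ! (p - 1), v} \<in> T" "{vs ! Suc p, v} \<in> T"
      using edge[of "p - 1"] edge[of p] p 3 by (simp_all add: insert_commute)
    moreover have "vs ! (p - 1) \<noteq> vs ! Suc p" "vs ! (p - 1) \<noteq> v" "vs ! Suc p \<noteq> v"
      using inj p 3 by auto
    ultimately show ?thesis by blast
  qed
qed

lemma acyclic_insert_pendant_edge:
  assumes acyclic: "\<not> has_cycle T" and edges: "\<forall>e\<in>T. e \<subseteq> W" and v: "v \<notin> W"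
  shows "\<not> has_cycle (insert {u, v} T)"
proof
  assume "has_cycle (insert {u, v} T)"
  then obtain vs where len: "3 \<le> length vs" and dist: "distinct vs"
    and walk: "is_walk (insert {u, v} T) vs" and closing: "{last vs, hd vs} \<in> insert {u, v} T"
    unfolding has_cycle_def is_walk_def by blast
  have no_edge_at_v: "{x, v} \<notin> T" for x
    using edges v by blast
  show False
  proof (cases "v \<in> set vs")
    case True
    then show False
      using cycle_two_neighbours[OF len dist walk closing] no_edge_at_v
      by (auto simp: doubleton_eq_iff)
  next
    case False
    have "is_walk T vs"
      unfolding is_walk_def
    proof (intro allI impI)
      fix i assume i: "Suc i < length vs"
      then have "v \<notin> {vs ! i, vs ! Suc i}"
        using False nth_mem[of i vs] nth_mem[of "Suc i" vs] by auto
      then show "{vs ! i, vs ! Suc i} \<in> T"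
        using walk i unfolding is_walk_def by blast
    qed
    moreover have "v \<notin> {last vs, hd vs}"
      using False len last_in_set[of vs] hd_in_set[of vs] by fastforce
    then have "{last vs, hd vs} \<in> T"
      using closing by blast
    ultimately have "has_cycle T"
      using len dist unfolding has_cycle_def is_walk_def by blast
    with acyclic show False ..
  qed
qed

lemma connected_graph_insert_pendant:
  assumes conn: "connected_graph W T" and u: "u \<in> W"
  shows "connected_graph (insert v W) (insert {u, v} T)"
proof -
  have mono: "(adj T)\<^sup>* \<subseteq> (adj (insert {u, v} T))\<^sup>*"
    by (intro rtrancl_mono) auto
  have from_u: "(u, x) \<in> (adj (insert {u, v} T))\<^sup>*" if "x \<in> insert v W" for x
  proof (cases "x = v")
    case True
    then show ?thesis by (simp add: r_into_rtrancl)
  next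
    case False
    then have "(u, x) \<in> (adj T)\<^sup>*"
      using conn u that unfolding connected_graph_def by blast
    then show ?thesis using mono by blast
  qed
  show ?thesis
    unfolding connected_graph_def
  proof (intro conjI ballI)
    fix x y assume "x \<in> insert v W" "y \<in> insert v W"
    then show "(x, y) \<in> (adj (insert {u, v} T))\<^sup>*"
      using from_u by (blast intro: rtrancl_trans adj_rtrancl_sym)
  qed simp
qed

lemma is_subtree_insert_pendant:
  assumes tree: "is_subtree V E W T" and "v \<in> V" "v \<notin> W" "u \<in> W" "{u, v} \<in> E"
  shows "is_subtree V E (insert v W) (insert {u, v} T)"
  using assms acyclic_insert_pendant_edge[of T W v u] connected_graph_insert_pendant[of W T u v]
  unfolding is_subtree_def by blast

section \<open>Proper trees with two colors are paths\<close>

lemma proper_tree_three_edges_at_vertex: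
  assumes "proper_tree c T" "finite T" "e1 \<in> T" "e2 \<in> T" "e3 \<in> T"
    "e1 \<noteq> e2" "e1 \<noteq> e3" "e2 \<noteq> e3" "x \<in> e1" "x \<in> e2" "x \<in> e3"
  shows "3 \<le> card (c ` T)"
proof -
  have "c e1 \<noteq> c e2" "c e1 \<noteq> c e3" "c e2 \<noteq> c e3"
    using assms unfolding proper_tree_def by blast+
  then have "card {c e1, c e2, c e3} = 3" by simp
  moreover have "{c e1, c e2, c e3} \<subseteq> c ` T" using assms by blast
  ultimately show ?thesis using assms(2) by (metis card_mono finite_imageI)
qed

lemma is_path_extend:
  assumes path: "is_path T vs" and a: "a \<in> set vs" and b: "b \<notin> set vs" and ab: "{a, b} \<in> T"
    and proper: "proper_tree c T" and fin: "finite T" and two: "card (c ` T) \<le> 2"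
  shows "\<exists>ws. is_path T ws \<and> set ws = insert b (set vs)"
proof -
  have dist: "distinct vs" and walk: "is_walk T vs"
    using path unfolding is_path_def by auto
  obtain i where i: "i < length vs" "vs ! i = a"
    using a by (metis in_set_conv_nth)
  consider "i = 0" | "Suc i = length vs" | "0 < i" "Suc i < length vs"
    using i by linarith
  then show ?thesis
  proof cases
    case 1
    then have "is_walk T (b # vs)"
      using is_walk_Cons[OF walk] ab i by (simp add: hd_conv_nth insert_commute)
    then show ?thesis
      using dist b unfolding is_path_def by (intro exI[of _ "b # vs"]) simp
  next
    case 2
    then have "vs \<noteq> []" "length vs - 1 = i" by auto
    then have "last vs = a"
      using i(2) by (simp add: last_conv_nth)
    then have "is_walk T (vs @ [b])"
      using is_walk_snoc[OF walk] ab by simp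
    then show ?thesis
      using dist b unfolding is_path_def by (intro exI[of _ "vs @ [b]"]) simp
  next
    case 3
    have "Suc (i - 1) = i" using 3 by simp
    then have edges: "{vs ! (i - 1), a} \<in> T" "{a, vs ! Suc i} \<in> T"
      using walk 3 i unfolding is_walk_def by (metis Suc_lessD, blast)
    have "vs ! (i - 1) \<noteq> vs ! Suc i" "vs ! (i - 1) \<noteq> a" "vs ! Suc i \<noteq> a"
      using 3 i by (auto simp: nth_eq_iff_index_eq[OF dist])
    moreover have "vs ! (i - 1) \<noteq> b" "vs ! Suc i \<noteq> b"
      using b 3 nth_mem[of "i - 1" vs] nth_mem[of "Suc i" vs] by auto
    ultimately have "3 \<le> card (c ` T)"
      using proper_tree_three_edges_at_vertex[OF proper fin edges ab, of a]
      by (auto simp: doubleton_eq_iff)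
    with two show ?thesis by simp
  qed
qed

lemma proper_tree_two_colors_hamiltonian:
  assumes fin: "finite W" and conn: "connected_graph W T" and edges: "\<forall>e\<in>T. e \<subseteq> W"
    and proper: "proper_tree c T" and two: "card (c ` T) \<le> 2"
  shows "\<exists>vs. is_path T vs \<and> set vs = W"
proof -
  have finT: "finite T"
    using edges fin by (metis Pow_iff finite_Pow_iff finite_subset subsetI)
  let ?P = "\<lambda>vs. is_path T vs \<and> set vs \<subseteq> W \<and> vs \<noteq> []"
  obtain w0 where "w0 \<in> W"
    using conn unfolding connected_graph_def by blast
  then have "?P [w0]"
    unfolding is_path_def is_walk_def by simp
  moreover have "\<forall>vs. ?P vs \<longrightarrow> length vs < Suc (card W)"
    using fin by (metis card_mono distinct_card is_path_def le_imp_less_Suc)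
  ultimately obtain vs where vs: "?P vs" and longest: "\<forall>ws. ?P ws \<longrightarrow> length ws \<le> length vs"
    using ex_has_greatest_nat[of ?P "[w0]" length] by blast
  have "set vs = W"
  proof (rule ccontr)
    assume "set vs \<noteq> W"
    then obtain w where w: "w \<in> W" "w \<notin> set vs"
      using vs by blast
    have "(hd vs, w) \<in> (adj T)\<^sup>*"
      using conn vs w hd_in_set unfolding connected_graph_def by blast
    then obtain a b where ab: "{a, b} \<in> T" "a \<in> set vs" "b \<notin> set vs"
      using adj_rtrancl_crossing[of "hd vs" w T "set vs"] vs w by auto
    then obtain ws where ws: "is_path T ws" "set ws = insert b (set vs)"
      using is_path_extend[OF _ _ _ _ proper finT two] vs by blast
    have "b \<in> W" using ab edges by blast
    then have "?P ws" using ws vs by auto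
    moreover have "length ws = Suc (length vs)"
      using ws vs ab(3) by (metis distinct_card is_path_def card_insert_disjoint List.finite_set)
    ultimately show False using longest by fastforce
  qed
  then show ?thesis using vs by blast
qed

lemma is_subtree_two_colors_hamiltonian:
  assumes graph: "simple_graph V E" and tree: "is_subtree V E W T" and proper: "proper_tree c T"
    and two: "card (c ` E) \<le> 2"
  shows "\<exists>vs. is_path T vs \<and> set vs = W"
proof -
  have sub: "T \<subseteq> E" "W \<subseteq> V"
    using tree unfolding is_subtree_def by auto
  have "finite W"
    using graph sub(2) finite_subset unfolding simple_graph_def by blast
  moreover have "card (c ` T) \<le> 2"
    using two sub(1) simple_graph_finite_edges[OF graph] by (meson card_mono finite_imageI image_mono le_trans)
  ultimately show ?thesis
    using proper_tree_two_colors_hamiltonian[OF _ _ _ proper] tree unfolding is_subtree_def by blast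
qed

lemma traceable_if_two_colors_spanning_tree:
  assumes "simple_graph V E" "is_subtree V E V T" "proper_tree c T" "card (c ` E) \<le> 2"
  shows "traceable V E"
proof -
  obtain vs where "is_path T vs" "set vs = V"
    using is_subtree_two_colors_hamiltonian[OF assms] by blast
  moreover have "T \<subseteq> E" using assms(2) unfolding is_subtree_def by blast
  ultimately show ?thesis
    unfolding traceable_iff_path is_path_def using is_walk_mono by blast
qed

section \<open>Proper colorings and the proper index\<close>

lemma proper_treeD:
  "proper_tree c T \<Longrightarrow> e \<in> T \<Longrightarrow> f \<in> T \<Longrightarrow> e \<noteq> f \<Longrightarrow> e \<inter> f \<noteq> {} \<Longrightarrow> c e \<noteq> c f"
  unfolding proper_tree_def by blast

lemma proper_tree_subset: "proper_tree c T \<Longrightarrow> T' \<subseteq> T \<Longrightarrow> proper_tree c T'"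
  unfolding proper_tree_def by blast

lemma proper_tree_insert_fresh_color:
  assumes "proper_tree c T" "f \<notin> c ` T"
  shows "proper_tree (c(e := f)) (insert e T)"
  using assms unfolding proper_tree_def by (metis fun_upd_apply image_eqI insertE)

lemma k_proper_coloring_if_spanning_tree:
  "is_subtree V E V T \<Longrightarrow> proper_tree c T \<Longrightarrow> k_proper_coloring V E k c"
  unfolding k_proper_coloring_def by blast

lemma k_proper_coloring_exists:
  assumes graph: "simple_graph V E" and conn: "connected_graph V E"
  shows "\<exists>c. k_proper_coloring V E k c"
proof -
  have finE: "finite E" using simple_graph_finite_edges[OF graph] .
  obtain c :: "'a set \<Rightarrow> nat" where inj: "inj_on c E"
    using finite_imp_inj_to_nat_seg[OF finE] by blast
  obtain T where "T \<subseteq> E" "is_subtree V E V T"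
    using spanning_tree_exists[OF graph finE _ conn] by blast
  moreover have "proper_tree c T"
    using inj calculation(1) unfolding proper_tree_def by (meson inj_on_eq_iff subsetD)
  ultimately show ?thesis
    using k_proper_coloring_if_spanning_tree by blast
qed

lemma spanning_tree_if_k_proper_coloring_card:
  assumes "finite V" "k_proper_coloring V E (card V) c"
  shows "\<exists>T. is_subtree V E V T \<and> proper_tree c T"
proof -
  obtain W T where "is_subtree V E W T" "V \<subseteq> W" "proper_tree c T"
    using assms unfolding k_proper_coloring_def by blast
  moreover have "W = V"
    using calculation(1,2) unfolding is_subtree_def by blast
  ultimately show ?thesis by blast
qed

lemma proper_index_eqI:
  assumes "k_proper_coloring V E k c" "card (c ` E) \<le> m"
    and "\<And>c. k_proper_coloring V E k c \<Longrightarrow> m \<le> card (c ` E)"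
  shows "proper_index V E k = m"
  unfolding proper_index_def
proof (rule Least_equality)
  show "\<exists>c. k_proper_coloring V E k c \<and> card (c ` E) = m"
    using assms by (metis le_antisym)
qed (use assms(3) in blast)

lemma proper_index_attained:
  assumes "k_proper_coloring V E k c0"
  shows "\<exists>c. k_proper_coloring V E k c \<and> card (c ` E) = proper_index V E k"
proof -
  have "\<exists>m c. k_proper_coloring V E k c \<and> card (c ` E) = m"
    using assms by blast
  from LeastI_ex[OF this] show ?thesis
    unfolding proper_index_def .
qed

lemma traceable_two_coloring:
  assumes graph: "simple_graph V E" and nonempty: "V \<noteq> {}" and "traceable V E"
  shows "\<exists>c. k_proper_coloring V E k c \<and> card (c ` E) \<le> 2"
proof -
  obtain vs where dist: "distinct vs" and walk: "is_walk E vs" and V: "set vs = V"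
    using assms(3) unfolding traceable_iff_path is_path_def by blast
  define P where "P = (\<lambda>i. {vs ! i, vs ! Suc i}) ` {i. Suc i < length vs}"
  define c :: "'a set \<Rightarrow> nat" where
    "c e = (if e \<in> (\<lambda>i. {vs ! i, vs ! Suc i}) ` {i. Suc i < length vs \<and> even i} then 0 else 1)"
    for e
  have color: "c {vs ! i, vs ! Suc i} = (if even i then 0 else 1)" if "Suc i < length vs" for i
    using path_edges_eq[OF dist that] that unfolding c_def by auto
  have "proper_tree c P"
    unfolding proper_tree_def
  proof (intro ballI impI)
    fix e g assume "e \<in> P" "g \<in> P" and meet: "e \<noteq> g \<and> e \<inter> g \<noteq> {}"
    then obtain i j where ij: "Suc i < length vs" "e = {vs ! i, vs ! Suc i}"
      "Suc j < length vs" "g = {vs ! j, vs ! Suc j}"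
      unfolding P_def by blast
    then have "j = Suc i \<or> i = Suc j"
      using path_edges_meet[OF dist ij(1,3)] meet by blast
    then show "c e \<noteq> c g"
      using ij color by auto
  qed
  have "is_walk P vs" "vs \<noteq> []"
    unfolding is_walk_def P_def using V nonempty by auto
  then have conn: "connected_graph V P"
    using connected_graph_walk V by blast
  have PE: "P \<subseteq> E"
    using walk unfolding P_def is_walk_def by auto
  then have "finite P"
    using simple_graph_finite_edges[OF graph] by (rule finite_subset)
  \<comment> \<open>The path is itself a tree, but extracting a spanning tree saves proving that.\<close>
  then obtain T where "T \<subseteq> P" "is_subtree V E V T"
    using spanning_tree_exists[OF graph _ PE conn] by blast
  then have "k_proper_coloring V E k c"
    using k_proper_coloring_if_spanning_tree proper_tree_subset \<open>proper_tree c P\<close> by blast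
  moreover have "card (c ` E) \<le> 2"
  proof -
    have "c ` E \<subseteq> {0, 1}" unfolding c_def by auto
    then have "card (c ` E) \<le> card {0 :: nat, 1}" by (intro card_mono) auto
    then show ?thesis by simp
  qed
  ultimately show ?thesis by blast
qed

lemma k_proper_coloring_card_ge_2:
  assumes graph: "simple_graph V E" and three: "3 \<le> card V"
    and coloring: "k_proper_coloring V E (card V) c"
  shows "2 \<le> card (c ` E)"
proof (rule ccontr)
  assume "\<not> 2 \<le> card (c ` E)"
  then have few: "card (c ` E) \<le> 2" by simp
  have "finite V" using graph unfolding simple_graph_def by blast
  then obtain T where tree: "is_subtree V E V T" and proper: "proper_tree c T"
    using spanning_tree_if_k_proper_coloring_card coloring by blast
  obtain vs where path: "is_path T vs" and V: "set vs = V"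
    using is_subtree_two_colors_hamiltonian[OF graph tree proper few] by blast
  have dist: "distinct vs" and walk: "is_walk T vs"
    using path unfolding is_path_def by auto
  have len: "3 \<le> length vs"
    using three V distinct_card[OF dist] by simp
  let ?e1 = "{vs ! 0, vs ! 1}" and ?e2 = "{vs ! 1, vs ! 2}"
  have edges: "?e1 \<in> T" "?e2 \<in> T"
    using walk len unfolding is_walk_def numeral_2_eq_2 by auto
  have idx: "0 < length vs" "1 < length vs" "2 < length vs"
    using len by auto
  then have "vs ! 0 \<noteq> vs ! 2" "vs ! 0 \<noteq> vs ! 1"
    using nth_eq_iff_index_eq[OF dist idx(1,3)] nth_eq_iff_index_eq[OF dist idx(1,2)] by simp_all
  then have "vs ! 0 \<notin> ?e2" by simp
  then have "?e1 \<noteq> ?e2" by blast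
  moreover have "?e1 \<inter> ?e2 \<noteq> {}" by blast
  ultimately have "c ?e1 \<noteq> c ?e2"
    using proper_treeD[OF proper edges] by blast
  then have "card {c ?e1, c ?e2} = 2" by simp
  moreover have "{c ?e1, c ?e2} \<subseteq> c ` E"
    using edges tree unfolding is_subtree_def by blast
  then have "card {c ?e1, c ?e2} \<le> card (c ` E)"
    using simple_graph_finite_edges[OF graph] by (intro card_mono) auto
  ultimately show False using \<open>\<not> 2 \<le> card (c ` E)\<close> by simp
qed

lemma k_proper_coloring_card_ge_3:
  assumes graph: "simple_graph V E" and "\<not> traceable V E"
    and coloring: "k_proper_coloring V E (card V) c"
  shows "3 \<le> card (c ` E)"
proof (rule ccontr)
  assume "\<not> 3 \<le> card (c ` E)"
  moreover have "finite V" using graph unfolding simple_graph_def by blast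
  then obtain T where "is_subtree V E V T" "proper_tree c T"
    using spanning_tree_if_k_proper_coloring_card coloring by blast
  ultimately have "traceable V E"
    using traceable_if_two_colors_spanning_tree[OF graph] by simp
  with assms(2) show False ..
qed

lemma nontraceable_tree_avoids_vertex:
  assumes graph: "simple_graph V E" and nt: "\<not> traceable V E" and v: "v \<in> V"
    and coloring: "k_proper_coloring V E (card V - 1) c" and two: "card (c ` E) \<le> 2"
  shows "\<exists>T. is_subtree V E (V - {v}) T \<and> proper_tree c T"
proof -
  have "card (V - {v}) = card V - 1"
    using graph v unfolding simple_graph_def by simp
  then obtain W T where tree: "is_subtree V E W T" and W: "V - {v} \<subseteq> W"
    and proper: "proper_tree c T"
    using coloring unfolding k_proper_coloring_def by blast
  have "W \<subseteq> V" using tree unfolding is_subtree_def by auto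
  have "v \<notin> W"
  proof
    assume "v \<in> W"
    then have "W = V" using W \<open>W \<subseteq> V\<close> by blast
    then show False
      using traceable_if_two_colors_spanning_tree[OF graph _ proper two] tree nt by simp
  qed
  then have "W = V - {v}" using W \<open>W \<subseteq> V\<close> by blast
  then show ?thesis using tree proper by blast
qed

lemma nontraceable_three_coloring:
  assumes graph: "simple_graph V E" and conn: "connected_graph V E" and nt: "\<not> traceable V E"
    and two_vertices: "2 \<le> card V"
    and coloring: "k_proper_coloring V E (card V - 1) c" and two: "card (c ` E) \<le> 2"
  shows "\<exists>c'. k_proper_coloring V E (card V) c' \<and> card (c' ` E) \<le> 3"
proof -
  have finV: "finite V" using graph unfolding simple_graph_def by blast
  have finE: "finite E" using simple_graph_finite_edges[OF graph] .
  obtain v where v: "v \<in> V" using two_vertices by fastforce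
  then obtain T where tree: "is_subtree V E (V - {v}) T" and proper: "proper_tree c T"
    using nontraceable_tree_avoids_vertex[OF graph nt _ coloring two] by blast
  have "T \<subseteq> E" using tree unfolding is_subtree_def by auto
  obtain w where "w \<in> V" "w \<noteq> v"
    using two_vertices finV v by (metis card_le_Suc0_iff_eq not_less_eq_eq numeral_2_eq_2)
  then obtain u where vu: "{v, u} \<in> E"
    using connected_graph_neighbour[OF conn v] by metis
  then have uv: "{u, v} \<in> E" by (simp add: insert_commute)
  have "u \<noteq> v" using vu simple_graph_no_loop[OF graph] by auto
  then have "u \<in> V - {v}" using simple_graph_edge_subset[OF graph uv] by auto
  moreover have "insert v (V - {v}) = V" using v by blast
  ultimately have tree': "is_subtree V E V (insert {u, v} T)"
    using is_subtree_insert_pendant[OF tree v _ _ uv] by simp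
  obtain f where f: "f \<notin> c ` E"
    using ex_new_if_finite[OF infinite_UNIV_nat] finE by blast
  let ?c' = "c({u, v} := f)"
  have "proper_tree ?c' (insert {u, v} T)"
    using proper_tree_insert_fresh_color[OF proper] f \<open>T \<subseteq> E\<close> by blast
  then have "k_proper_coloring V E (card V) ?c'"
    using k_proper_coloring_if_spanning_tree[OF tree'] by blast
  moreover have "card (?c' ` E) \<le> 3"
  proof -
    have "?c' ` E \<subseteq> insert f (c ` E)" by auto
    then have "card (?c' ` E) \<le> card (insert f (c ` E))"
      using finE by (intro card_mono) auto
    also have "\<dots> \<le> 3" using two finE by (simp add: card_insert_le_m1)
    finally show ?thesis .
  qed
  ultimately show ?thesis by blast
qed

theorem mainTheorem6:
  fixes V :: "'a set" and E :: "'a set set"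
  assumes "simple_graph V E"
    and "connected_graph V E"
    and "card V \<ge> 4"
    and "\<forall>k. 3 \<le> k \<and> k \<le> card V - 1 \<longrightarrow> proper_index V E k = 2"
  shows "(traceable V E \<longrightarrow> proper_index V E (card V) = 2) \<and>
         (\<not> traceable V E \<longrightarrow> proper_index V E (card V) = 3)"
proof (intro conjI impI)
  assume "traceable V E"
  moreover have "V \<noteq> {}" using assms(2) unfolding connected_graph_def by blast
  ultimately obtain c where "k_proper_coloring V E (card V) c" "card (c ` E) \<le> 2"
    using traceable_two_coloring[OF assms(1)] by blast
  moreover have "3 \<le> card V" using assms(3) by simp
  ultimately show "proper_index V E (card V) = 2"
    using k_proper_coloring_card_ge_2[OF assms(1)] by (intro proper_index_eqI) auto
next
  assume nt: "\<not> traceable V E"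
  have "proper_index V E (card V - 1) = 2" using assms(3,4) by simp
  then obtain c where "k_proper_coloring V E (card V - 1) c" "card (c ` E) = 2"
    using proper_index_attained k_proper_coloring_exists[OF assms(1,2)] by metis
  then obtain c' where "k_proper_coloring V E (card V) c'" "card (c' ` E) \<le> 3"
    using nontraceable_three_coloring[OF assms(1,2) nt] assms(3) by fastforce
  then show "proper_index V E (card V) = 3"
    using k_proper_coloring_card_ge_3[OF assms(1) nt] by (intro proper_index_eqI) auto
qed

end
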